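(* Let $f(x)\in\mathbb{Z}[x]$ be a $0,1$-polynomial with $f(0)=1$ such that $f(x)$ is divisible by the product of two non-reciprocal irreducible polynomials in $\mathbb{Z}[x]$ (not necessarily distinct). Then there is a $0,1$-polynomial $g(x)$ with the same number of (nonzero) terms as $f(x)$, with $g(x)\notin\{f(x),\tilde f(x)\}$, satisfying $$f(x)\tilde f(x) = g(x)\tilde g(x).$$
   Context: A $0,1$-polynomial is a polynomial each of whose coefficients is $0$ or $1$. For nonzero $f(x)\in\mathbb{R}[x]$, $\tilde f(x)=x^{\deg f}f(1/x)$; $f$ is reciprocal if $f=\pm\tilde f$, and non-reciprocal otherwise. *)

theory Defs
  imports "HOL-Computational_Algebra.Computational_Algebra"
begin

abbreviation tilde :: "int poly \<Rightarrow> int poly" where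
  "tilde f \<equiv> reflect_poly f"

definition zero_one_poly :: "int poly \<Rightarrow> bool" where
  "zero_one_poly f \<longleftrightarrow> (\<forall>i. coeff f i \<in> {0, 1})"

definition reciprocal :: "int poly \<Rightarrow> bool" where
  "reciprocal f \<longleftrightarrow> f \<noteq> 0 \<and> (f = reflect_poly f \<or> f = - reflect_poly f)"

definition non_reciprocal :: "int poly \<Rightarrow> bool" where
  "non_reciprocal f \<longleftrightarrow> f \<noteq> 0 \<and> \<not> reciprocal f"

definition num_terms :: "int poly \<Rightarrow> nat" where
  "num_terms f = card {i. coeff f i \<noteq> 0}"

end

(*
  Write f = u v w.  Replacing a factor by its reciprocal does not change f f~, so
  h = u~ v w, u v~ w and u~ v~ w all satisfy h h~ = f f~.  If each of them were equal to
  f or f~ up to sign, cancelling common factors would force u = +-u~ or v = +-v~,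
  contradicting non-reciprocity.
  Conversely, any h with h(0) /= 0 and h h~ = f f~ has the same degree as f, the same
  middle coefficient sum h_i^2 = sum f_i^2 = f(1) of h h~, and h(1)^2 = f(1)^2.  After
  fixing the sign of h we get h(1) = sum h_i^2, which for integers forces every h_i into
  {0, 1}; then h has h(1) = f(1) terms, like f.
*)
theory Submission
  imports Defs
begin

lemma poly_reflect_poly_1: "poly (reflect_poly p) 1 = poly p (1 :: 'a :: comm_semiring_1)"
proof -
  have "poly (reflect_poly p) 1 = (\<Sum>i\<le>degree p. coeff (reflect_poly p) i)"
    unfolding poly_altdef power_one mult_1_right
    by (rule sum.mono_neutral_left) (auto simp: coeff_eq_0 degree_reflect_poly_le)
  also have "\<dots> = (\<Sum>i\<le>degree p. coeff p (degree p - i))"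
    by (simp add: coeff_reflect_poly)
  also have "\<dots> = poly p 1"
    unfolding poly_altdef
    by (rule sum.reindex_bij_witness[where i="\<lambda>i. degree p - i" and j="\<lambda>i. degree p - i"]) auto
  finally show ?thesis .
qed

lemma coeff_mult_reflect_poly_degree:
  "coeff (p * reflect_poly p) (degree p) = (\<Sum>i\<le>degree p. coeff p i ^ 2)"
  for p :: "'a :: comm_semiring_1 poly"
  by (auto simp: coeff_mult coeff_reflect_poly power2_eq_square intro!: sum.cong)

lemma reflect_poly_minus: "reflect_poly (- p) = - reflect_poly (p :: 'a :: ring poly)"
  by (rule poly_eqI) (simp add: coeff_reflect_poly)

lemma zero_one_poly_if_poly_1_eq_sum_squares:
  fixes p :: "int poly"
  assumes "poly p 1 = (\<Sum>i\<le>degree p. coeff p i ^ 2)"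
  shows "zero_one_poly p"
proof -
  have nonneg: "0 \<le> coeff p i ^ 2 - coeff p i" for i
  proof (cases "coeff p i \<le> 0")
    case True
    then show ?thesis using zero_le_power2[of "coeff p i"] by linarith
  next
    case False
    then show ?thesis by (simp add: self_le_power)
  qed
  have "(\<Sum>i\<le>degree p. coeff p i ^ 2 - coeff p i) = 0"
    using assms by (simp add: sum_subtractf poly_altdef)
  then have "coeff p i ^ 2 - coeff p i = 0" if "i \<le> degree p" for i
    using that nonneg sum_nonneg_eq_0_iff[of "{..degree p}" "\<lambda>i. coeff p i ^ 2 - coeff p i"] by blast
  then have "coeff p i * (coeff p i - 1) = 0" for i
    by (cases "i \<le> degree p") (auto simp: coeff_eq_0 power2_eq_square algebra_simps)
  then show ?thesis by (auto simp: zero_one_poly_def)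
qed

lemma sum_squares_coeff_zero_one_poly:
  assumes "zero_one_poly p"
  shows "(\<Sum>i\<le>degree p. coeff p i ^ 2) = poly p 1"
proof -
  have "coeff p i ^ 2 = coeff p i" for i
    using assms by (auto simp: zero_one_poly_def elim!: allE[of _ i])
  then show ?thesis by (simp add: poly_altdef)
qed

lemma num_terms_zero_one_poly:
  assumes "zero_one_poly p"
  shows "int (num_terms p) = poly p 1"
proof -
  have "{i. coeff p i \<noteq> 0} \<subseteq> {..degree p}"
    using le_degree by auto
  then have "int (num_terms p) = (\<Sum>i\<le>degree p. if coeff p i \<noteq> 0 then 1 else 0)"
    by (simp add: num_terms_def sum.If_cases Int_absorb1)
  also have "\<dots> = poly p 1"
  proof -
    have "(if coeff p i \<noteq> 0 then 1 else 0) = coeff p i" for i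
      using assms by (auto simp: zero_one_poly_def elim!: allE[of _ i])
    then show ?thesis by (simp add: poly_altdef)
  qed
  finally show ?thesis .
qed

lemma zero_one_poly_if_reflect_product_eq:
  fixes f g :: "int poly"
  assumes f01: "zero_one_poly f" and f0: "coeff f 0 \<noteq> 0" and g0: "coeff g 0 \<noteq> 0"
    and prod: "g * reflect_poly g = f * reflect_poly f" and at_1: "poly g 1 = poly f 1"
  shows "zero_one_poly g" and "num_terms g = num_terms f"
proof -
  have "degree (g * reflect_poly g) = degree (f * reflect_poly f)"
    using prod by simp
  moreover have "f \<noteq> 0" "g \<noteq> 0"
    using f0 g0 by auto
  ultimately have deg: "degree g = degree f"
    using f0 g0 by (simp add: degree_mult_eq)
  have "(\<Sum>i\<le>degree g. coeff g i ^ 2) = coeff (g * reflect_poly g) (degree g)"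
    by (rule coeff_mult_reflect_poly_degree [symmetric])
  also have "\<dots> = coeff (f * reflect_poly f) (degree f)"
    by (simp only: prod deg)
  also have "\<dots> = (\<Sum>i\<le>degree f. coeff f i ^ 2)"
    by (rule coeff_mult_reflect_poly_degree)
  also have "\<dots> = poly g 1"
    using f01 at_1 by (simp add: sum_squares_coeff_zero_one_poly)
  finally show g01: "zero_one_poly g"
    by (intro zero_one_poly_if_poly_1_eq_sum_squares) simp
  show "num_terms g = num_terms f"
    using num_terms_zero_one_poly[OF f01] num_terms_zero_one_poly[OF g01] at_1 by simp
qed

lemma zero_one_poly_up_to_sign_if_reflect_product_eq:
  fixes f h :: "int poly"
  assumes "zero_one_poly f" and "coeff f 0 \<noteq> 0" and h0: "coeff h 0 \<noteq> 0"
    and prod: "h * reflect_poly h = f * reflect_poly f"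
  obtains g where "g \<in> {h, - h}" and "zero_one_poly g" and "num_terms g = num_terms f"
    and "g * reflect_poly g = f * reflect_poly f"
proof -
  have "(poly h 1)\<^sup>2 = (poly f 1)\<^sup>2"
    using arg_cong[OF prod, of "\<lambda>p. poly p 1"] by (simp add: poly_reflect_poly_1 power2_eq_square)
  then have "poly h 1 = poly f 1 \<or> poly (- h) 1 = poly f 1"
    by (auto simp: power2_eq_iff)
  then obtain g where g: "g \<in> {h, - h}" and at_1: "poly g 1 = poly f 1"
    by blast
  have "g * reflect_poly g = f * reflect_poly f" and "coeff g 0 \<noteq> 0"
    using g prod h0 by (auto simp: reflect_poly_minus)
  with assms at_1 g show thesis
    using zero_one_poly_if_reflect_product_eq that by blast
qed

lemma swapped_products_not_all_trivial:
  fixes a b c A B C :: "'a::linordered_idom"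
  assumes pos: "a > 0" "b > 0" "c > 0" "A > 0" "B > 0" "C > 0"
    and "A \<noteq> a" "B \<noteq> b"
  shows "A * b * c \<notin> {a * b * c, A * B * C} \<or> a * B * c \<notin> {a * b * c, A * B * C}
    \<or> A * B * c \<notin> {a * b * c, A * B * C}"
proof (rule ccontr)
  assume "\<not> ?thesis"
  then have Abc: "A * b * c \<in> {a * b * c, A * B * C}" and aBc: "a * B * c \<in> {a * b * c, A * B * C}"
    and ABc: "A * B * c \<in> {a * b * c, A * B * C}" by blast+
  have bc: "b * c = B * C" using Abc assms by auto
  have ac: "a * c = A * C" using aBc assms by auto
  have "c = C"
    using ABc
  proof
    assume "A * B * c = a * b * c"
    then have ab: "a * b = A * B" using pos by simp
    have "(a * b) * c\<^sup>2 = (b * c) * (a * c)"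
      by (simp add: power2_eq_square ac_simps)
    also have "\<dots> = (a * b) * C\<^sup>2"
      by (simp add: ab bc ac power2_eq_square ac_simps)
    finally have "c\<^sup>2 = C\<^sup>2" using pos by simp
    then show "c = C" using pos by (simp add: power2_eq_iff_nonneg)
  qed (use pos in simp)
  then show False using bc pos \<open>B \<noteq> b\<close> by simp
qed

lemma abs_reflect_poly_neq_if_non_reciprocal:
  "non_reciprocal u \<Longrightarrow> \<bar>reflect_poly u\<bar> \<noteq> \<bar>u\<bar>"
  by (auto simp: non_reciprocal_def reciprocal_def abs_eq_iff)

lemma exists_nontrivial_reflect_swap:
  fixes u v w :: "int poly"
  assumes nu: "non_reciprocal u" and nv: "non_reciprocal v" and "coeff (u * v * w) 0 \<noteq> 0"
  obtains h where "h * reflect_poly h = (u * v * w) * reflect_poly (u * v * w)"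
    and "coeff h 0 \<noteq> 0"
    and "\<bar>h\<bar> \<notin> {\<bar>u * v * w\<bar>, \<bar>reflect_poly (u * v * w)\<bar>}"
proof -
  have u0: "coeff u 0 \<noteq> 0" and v0: "coeff v 0 \<noteq> 0" and w0: "coeff w 0 \<noteq> 0"
    using assms(3) by (auto simp: coeff_mult_0)
  then have nz: "u \<noteq> 0" "v \<noteq> 0" "w \<noteq> 0" by auto
  define f where "f = u * v * w"
  define g1 where "g1 = reflect_poly u * v * w"
  define g2 where "g2 = u * reflect_poly v * w"
  define g3 where "g3 = reflect_poly u * reflect_poly v * w"
  have "g1 * reflect_poly g1 = f * reflect_poly f" "g2 * reflect_poly g2 = f * reflect_poly f"
    "g3 * reflect_poly g3 = f * reflect_poly f"
    using u0 v0 unfolding f_def g1_def g2_def g3_def by (simp_all add: reflect_poly_mult ac_simps)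
  moreover have "coeff g1 0 \<noteq> 0" "coeff g2 0 \<noteq> 0" "coeff g3 0 \<noteq> 0"
    using u0 v0 w0 nz unfolding g1_def g2_def g3_def by (simp_all add: coeff_mult_0)
  \<comment> \<open>In the ordered ring \<open>int poly\<close>, \<open>\<bar>p\<bar> = \<bar>q\<bar>\<close> means \<open>p = \<plusminus>q\<close>, and \<open>\<bar>_\<bar>\<close> is multiplicative.\<close>
  moreover have "\<bar>g1\<bar> \<notin> {\<bar>f\<bar>, \<bar>reflect_poly f\<bar>} \<or> \<bar>g2\<bar> \<notin> {\<bar>f\<bar>, \<bar>reflect_poly f\<bar>}
    \<or> \<bar>g3\<bar> \<notin> {\<bar>f\<bar>, \<bar>reflect_poly f\<bar>}"
    unfolding f_def g1_def g2_def g3_def abs_mult reflect_poly_mult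
    using nz abs_reflect_poly_neq_if_non_reciprocal[OF nu] abs_reflect_poly_neq_if_non_reciprocal[OF nv]
    by (intro swapped_products_not_all_trivial) simp_all
  ultimately show thesis
    using that unfolding f_def by blast
qed

theorem lemma2:
  fixes f :: "int poly"
  assumes "zero_one_poly f"
    and "coeff f 0 = 1"
    and "\<exists>u v :: int poly. irreducible u \<and> irreducible v \<and>
           non_reciprocal u \<and> non_reciprocal v \<and> u * v dvd f"
  shows "\<exists>g :: int poly. zero_one_poly g \<and> num_terms g = num_terms f \<and>
           g \<notin> {f, reflect_poly f} \<and> f * reflect_poly f = g * reflect_poly g"
proof -
  obtain u v where nu: "non_reciprocal u" and nv: "non_reciprocal v" and "u * v dvd f"
    using assms(3) by blast
  then obtain w where f: "f = u * v * w"
    by (elim dvdE)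
  have f0: "coeff f 0 \<noteq> 0"
    using assms(2) by simp
  obtain h where prod: "h * reflect_poly h = f * reflect_poly f" and h0: "coeff h 0 \<noteq> 0"
    and new: "\<bar>h\<bar> \<notin> {\<bar>f\<bar>, \<bar>reflect_poly f\<bar>}"
    using exists_nontrivial_reflect_swap[OF nu nv f0[unfolded f]] unfolding f[symmetric] .
  obtain g where g: "g \<in> {h, - h}" and "zero_one_poly g" "num_terms g = num_terms f"
    "g * reflect_poly g = f * reflect_poly f"
    using zero_one_poly_up_to_sign_if_reflect_product_eq[OF assms(1) f0 h0 prod] .
  moreover have "g \<notin> {f, reflect_poly f}"
    using g new by auto
  ultimately show ?thesis
    by (intro exI[of _ g]) simp
qed

end
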